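(* Consider the packet spreading algorithm described in the context with $N=2$ and $K_1\ge K_2$. Then $x_n^{K-1}=K_n$ for $n=1,2$; that is, the output pattern $P$ of length $K=K_1+K_2$ contains exactly $K_n$ occurrences of source $n$.
   Context: Packet spreading algorithm: Let $N\ge 2$, let $K_1,\dots,K_N$ be positive integers and $K=\sum_{n=1}^N K_n$. The algorithm runs iterations $k=0,1,\dots,K-1$ and maintains deficit counters $B_n^k$, $1\le n\le N$, with $B_n^0=0$ for all $n$. In iteration $k$, define the quantums $Q_n^k=\frac{(1-B_n^k)K}{K_n}$; select a source $m_k\in\arg\min_{1\le n\le N} Q_n^k$ (ties broken arbitrarily); let $Q=Q_{m_k}^k$; set $B_n^{k+1}=B_n^k+Q\frac{K_n}{K}$ for $n\neq m_k$ and $B_{m_k}^{k+1}=0$; and set the $k$-th entry of the output pattern to $P(k)=m_k$. For $0\le k\le K-1$, $x_n^k$ denotes the number of indices $k'\in\{0,\dots,k\}$ with $m_{k'}=n$, i.e. the number of source-$n$ instances inserted into the pattern after iteration $k$. *)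

theory Defs
  imports Main "HOL.Real"
begin

text \<open>Packet spreading algorithm. Sources are 1..N, Ks n = K_n, B k n = deficit counter
  B_n^k, m k = selected source m_k in iteration k. Ties are broken arbitrarily: any
  minimiser is allowed.\<close>

definition total :: "nat \<Rightarrow> (nat \<Rightarrow> nat) \<Rightarrow> nat" where
  "total N Ks = (\<Sum>n=1..N. Ks n)"

definition quantum :: "nat \<Rightarrow> (nat \<Rightarrow> nat) \<Rightarrow> (nat \<Rightarrow> nat \<Rightarrow> real) \<Rightarrow> nat \<Rightarrow> nat \<Rightarrow> real" where
  "quantum N Ks B k n = (1 - B k n) * real (total N Ks) / real (Ks n)"

definition valid_run :: "nat \<Rightarrow> (nat \<Rightarrow> nat) \<Rightarrow> (nat \<Rightarrow> nat \<Rightarrow> real) \<Rightarrow> (nat \<Rightarrow> nat) \<Rightarrow> bool" where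
  "valid_run N Ks B m \<longleftrightarrow>
     (\<forall>n\<in>{1..N}. B 0 n = 0) \<and>
     (\<forall>k < total N Ks.
        m k \<in> {1..N} \<and>
        (\<forall>n\<in>{1..N}. quantum N Ks B k (m k) \<le> quantum N Ks B k n) \<and>
        B (Suc k) (m k) = 0 \<and>
        (\<forall>n\<in>{1..N}. n \<noteq> m k \<longrightarrow>
            B (Suc k) n = B k n + quantum N Ks B k (m k) * real (Ks n) / real (total N Ks)))"

definition count_src :: "(nat \<Rightarrow> nat) \<Rightarrow> nat \<Rightarrow> nat \<Rightarrow> nat" where
  "count_src m n k = card {k'. k' \<le> k \<and> m k' = n}"

end

theory Submission
  imports Defs
begin

text \<open>Writing \<open>S\<^sub>k\<close> for the sum of the quanta selected in iterations \<open>0..k-1\<close>, every quantum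
  has the closed form \<open>Q\<^sub>n\<^sup>k = (x\<^sub>n + 1) K / K\<^sub>n - S\<^sub>k\<close>, where \<open>x\<^sub>n\<close> counts the earlier
  selections of \<open>n\<close>. Comparing quanta therefore compares \<open>(x\<^sub>n + 1) / K\<^sub>n\<close>, so a source that has
  already reached its quota \<open>K\<^sub>n\<close> is never a minimiser while another source is below its quota.
  Hence no source exceeds its quota, and since the counts add up to \<open>K\<close> after \<open>K\<close> iterations,
  every quota is met exactly. This works for any number of sources.\<close>

definition picks :: "(nat \<Rightarrow> nat) \<Rightarrow> nat \<Rightarrow> nat \<Rightarrow> nat" where
  "picks m n k = card {k'. k' < k \<and> m k' = n}"

lemma picks_0 [simp]: "picks m n 0 = 0"
  by (simp add: picks_def)

lemma picks_Suc: "picks m n (Suc k) = picks m n k + (if m k = n then 1 else 0)"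
proof -
  have "{k'. k' < Suc k \<and> m k' = n} =
      (if m k = n then insert k {k'. k' < k \<and> m k' = n} else {k'. k' < k \<and> m k' = n})"
    by (auto simp: less_Suc_eq)
  then show ?thesis
    by (simp add: picks_def)
qed

lemma count_src_eq_picks: "count_src m n k = picks m n (Suc k)"
  unfolding count_src_def picks_def by (simp add: less_Suc_eq_le)

lemma valid_run_step:
  assumes "valid_run N Ks B m" "k < total N Ks"
  shows "m k \<in> {1..N}"
    and "n \<in> {1..N} \<Longrightarrow> quantum N Ks B k (m k) \<le> quantum N Ks B k n"
    and "B (Suc k) (m k) = 0"
    and "n \<in> {1..N} \<Longrightarrow> n \<noteq> m k \<Longrightarrow>
           B (Suc k) n = B k n + quantum N Ks B k (m k) * real (Ks n) / real (total N Ks)"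
  using assms unfolding valid_run_def by blast+

lemma sum_picks:
  assumes "valid_run N Ks B m" "k \<le> total N Ks"
  shows "(\<Sum>n=1..N. picks m n k) = k"
  using assms(2)
proof (induction k)
  case (Suc k)
  have "m k \<in> {1..N}"
    using valid_run_step(1)[OF assms(1)] Suc.prems by simp
  then have "(\<Sum>n=1..N. if m k = n then 1 else 0 :: nat) = 1"
    by (simp add: sum.delta)
  with Suc show ?case
    by (simp add: picks_Suc sum.distrib)
qed simp

lemma quantum_Suc_selected:
  assumes "valid_run N Ks B m" "k < total N Ks"
  shows "quantum N Ks B (Suc k) (m k) = real (total N Ks) / real (Ks (m k))"
  using valid_run_step(3)[OF assms] by (simp add: quantum_def)

lemma quantum_Suc_other:
  assumes "valid_run N Ks B m" "k < total N Ks" "n \<in> {1..N}" "n \<noteq> m k" "Ks n > 0"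
  shows "quantum N Ks B (Suc k) n = quantum N Ks B k n - quantum N Ks B k (m k)"
proof -
  define Q where "Q = quantum N Ks B k (m k)"
  define K where "K = real (total N Ks)"
  have "K > 0"
    using assms(2) by (simp add: K_def)
  have "quantum N Ks B (Suc k) n = (1 - B k n - Q * real (Ks n) / K) * K / real (Ks n)"
    using valid_run_step(4)[OF assms(1-4)] by (simp add: quantum_def Q_def K_def)
  also have "\<dots> = (1 - B k n) * K / real (Ks n) - Q"
    using \<open>K > 0\<close> assms(5) by (simp add: field_simps)
  finally show ?thesis
    by (simp add: quantum_def Q_def K_def)
qed

lemma quantum_closed_form:
  assumes "valid_run N Ks B m" "\<forall>n\<in>{1..N}. Ks n > 0" "k \<le> total N Ks" "n \<in> {1..N}"
  shows "quantum N Ks B k n =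
    (real (picks m n k) + 1) * real (total N Ks) / real (Ks n) - (\<Sum>j<k. quantum N Ks B j (m j))"
  using assms(3,4)
proof (induction k arbitrary: n)
  case 0
  then show ?case
    using assms(1) by (simp add: valid_run_def quantum_def)
next
  case (Suc k)
  let ?K = "real (total N Ks)"
  have k: "k < total N Ks"
    using Suc.prems by simp
  have IH: "quantum N Ks B k n' = (real (picks m n' k) + 1) * ?K / real (Ks n')
      - (\<Sum>j<k. quantum N Ks B j (m j))" if "n' \<in> {1..N}" for n'
    using Suc.IH k that by simp
  show ?case
  proof (cases "n = m k")
    case True
    then show ?thesis
      using quantum_Suc_selected[OF assms(1) k] IH[OF Suc.prems(2)]
      by (simp add: picks_Suc add_divide_distrib field_simps)
  next
    case False
    then show ?thesis
      using quantum_Suc_other[OF assms(1) k Suc.prems(2) False] assms(2) Suc.prems(2)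
        IH[OF Suc.prems(2)] IH[OF valid_run_step(1)[OF assms(1) k]]
      by (simp add: picks_Suc)
  qed
qed

lemma quota_le_of_ratio_le:
  fixes a b p K :: nat
  assumes "a > 0" "b > 0" "K > 0"
    and "(real a + 1) * real K / real a \<le> (real p + 1) * real K / real b"
  shows "b \<le> p"
proof -
  have "(real a + 1) * real b \<le> (real p + 1) * real a"
    using assms by (simp add: divide_simps mult.commute mult.left_commute)
  then have "a * b + b \<le> p * a + a"
    by (simp add: algebra_simps flip: of_nat_mult of_nat_add)
  then have "a * b < a * (p + 1)"
    using assms(2) by (simp add: algebra_simps)
  then show ?thesis
    using mult_less_cancel1[of a b "p + 1"] by simp
qed

lemma picks_le_quota:
  assumes "valid_run N Ks B m" "\<forall>n\<in>{1..N}. Ks n > 0" "k \<le> total N Ks"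
  shows "\<forall>n\<in>{1..N}. picks m n k \<le> Ks n"
  using assms(3)
proof (induction k)
  case (Suc k)
  have k: "k < total N Ks"
    using Suc.prems by simp
  have IH: "\<forall>n\<in>{1..N}. picks m n k \<le> Ks n"
    using Suc.IH k by simp
  have "picks m (m k) k < Ks (m k)"
  proof (rule ccontr)
    assume "\<not> ?thesis"
    then have full: "picks m (m k) k = Ks (m k)"
      using IH valid_run_step(1)[OF assms(1) k] by (simp add: not_less le_antisym)
    have "Ks n \<le> picks m n k" if n: "n \<in> {1..N}" for n
    proof (rule quota_le_of_ratio_le)
      show "0 < Ks (m k)" "0 < Ks n" "0 < total N Ks"
        using assms(2) n valid_run_step(1)[OF assms(1) k] k by auto
      show "(real (Ks (m k)) + 1) * real (total N Ks) / real (Ks (m k))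
          \<le> (real (picks m n k) + 1) * real (total N Ks) / real (Ks n)"
        using valid_run_step(2)[OF assms(1) k n] full k
          quantum_closed_form[OF assms(1,2), of k n] n
          quantum_closed_form[OF assms(1,2), of k "m k"] valid_run_step(1)[OF assms(1) k]
        by simp
    qed
    then have "\<forall>n\<in>{1..N}. picks m n k = Ks n"
      using IH by (simp add: le_antisym)
    then have "k = total N Ks"
      using sum_picks[OF assms(1), of k] k unfolding total_def by simp
    with k show False
      by simp
  qed
  then show ?case
    using IH by (simp add: picks_Suc)
qed simp

lemma count_src_eq_quota:
  assumes "valid_run N Ks B m" "\<forall>n\<in>{1..N}. Ks n > 0" "n \<in> {1..N}"
  shows "count_src m n (total N Ks - 1) = Ks n"
proof -
  have "Ks n \<le> total N Ks"
    using assms(3) unfolding total_def by (intro member_le_sum) auto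
  then have "Suc (total N Ks - 1) = total N Ks"
    using assms(2,3) by fastforce
  then have "count_src m n (total N Ks - 1) = picks m n (total N Ks)"
    by (simp add: count_src_eq_picks)
  also have "\<dots> = Ks n"
  proof -
    have le: "\<forall>n\<in>{1..N}. picks m n (total N Ks) \<le> Ks n"
      using picks_le_quota[OF assms(1,2)] by simp
    have "(\<Sum>n=1..N. picks m n (total N Ks)) = (\<Sum>n=1..N. Ks n)"
      using sum_picks[OF assms(1)] by (simp add: total_def)
    then show ?thesis
      using sum_mono_inv[of "\<lambda>n. picks m n (total N Ks)" "{1..N}" Ks n] le assms(3) by simp
  qed
  finally show ?thesis .
qed

theorem mainTheorem3:
  fixes Ks :: "nat \<Rightarrow> nat" and B :: "nat \<Rightarrow> nat \<Rightarrow> real" and m :: "nat \<Rightarrow> nat"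
  assumes "Ks 1 > 0" and "Ks 2 > 0" and "Ks 1 \<ge> Ks 2"
    and "valid_run 2 Ks B m"
  shows "\<forall>n\<in>{1,2}. count_src m n (total 2 Ks - 1) = Ks n"
proof -
  have "{1..2} = {1, 2 :: nat}"
    by auto
  moreover have "\<forall>n\<in>{1..2}. Ks n > 0"
    using assms(1,2) by (auto simp: le_Suc_eq numeral_2_eq_2)
  ultimately show ?thesis
    using count_src_eq_quota[OF assms(4)] by simp
qed

end
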